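(* Let $A,B,C,D,E\in\mathbb{C}$, $P(x)=A+4Bx+6Cx^2+4Dx^3+Ex^4$, $R(x,y)=A+2B(x+y)+3C(x^2+y^2)+2Dxy(x+y)+Ex^2y^2$, and $$\hat R(x,y)=-4B^2+4(AD-3BC)(x+y)+2(AE+2BD-9C^2)(x^2+y^2)+4(BE-3CD)xy(x+y)-4D^2x^2y^2-(AE+4BD-9C^2)(x-y)^2.$$ For $\theta\in\mathbb{C}$ let $\Phi_\theta(x,y)=-(x-y)^2\theta^2+2R(x,y)\theta+\hat R(x,y)$, and write $\Phi_\theta(x,y)=a_\theta(x)y^2+2b_\theta(x)y+c_\theta(x)$ with $a_\theta,b_\theta,c_\theta$ polynomials in $x$. Let $G_\theta=b_\theta^2-a_\theta c_\theta$. Then $G_\theta(x)=p(\theta)P(x)$, where $$p(\theta)=2\theta(\theta-3C)^2+2\theta(4BD-AE)+4B^2E+4AD^2-24BCD.$$ *)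

theory Defs
  imports Complex_Main "HOL-Computational_Algebra.Polynomial"
begin

definition quartP :: "complex \<Rightarrow> complex \<Rightarrow> complex \<Rightarrow> complex \<Rightarrow> complex \<Rightarrow> complex \<Rightarrow> complex" where
  "quartP A B C D E x = A + 4*B*x + 6*C*x^2 + 4*D*x^3 + E*x^4"

definition RR :: "complex \<Rightarrow> complex \<Rightarrow> complex \<Rightarrow> complex \<Rightarrow> complex \<Rightarrow> complex \<Rightarrow> complex \<Rightarrow> complex" where
  "RR A B C D E x y = A + 2*B*(x+y) + 3*C*(x^2+y^2) + 2*D*x*y*(x+y) + E*x^2*y^2"

definition RRhat :: "complex \<Rightarrow> complex \<Rightarrow> complex \<Rightarrow> complex \<Rightarrow> complex \<Rightarrow> complex \<Rightarrow> complex \<Rightarrow> complex" where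
  "RRhat A B C D E x y = - 4*B^2 + 4*(A*D - 3*B*C)*(x+y) + 2*(A*E + 2*B*D - 9*C^2)*(x^2+y^2)
     + 4*(B*E - 3*C*D)*x*y*(x+y) - 4*D^2*x^2*y^2 - (A*E + 4*B*D - 9*C^2)*(x-y)^2"

definition Phi :: "complex \<Rightarrow> complex \<Rightarrow> complex \<Rightarrow> complex \<Rightarrow> complex \<Rightarrow> complex \<Rightarrow> complex \<Rightarrow> complex \<Rightarrow> complex" where
  "Phi A B C D E t x y = 2*RR A B C D E x y*t - (x-y)^2*t^2 + RRhat A B C D E x y"

definition pth :: "complex \<Rightarrow> complex \<Rightarrow> complex \<Rightarrow> complex \<Rightarrow> complex \<Rightarrow> complex \<Rightarrow> complex" where
  "pth A B C D E t = 2*t*(t - 3*C)^2 + 2*t*(4*B*D - A*E) + 4*B^2*E + 4*A*D^2 - 24*B*C*D"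

end

theory Submission
  imports Defs
begin

text \<open>Since \<open>\<Phi>\<^sub>\<theta>(x, y)\<close> is quadratic in \<open>y\<close>, its coefficients at a fixed \<open>x\<close> are
  determined by its values at \<open>y = 0, 1, -1\<close>. Hence \<open>G\<^sub>\<theta>(x)\<close> is an explicit expression in
  \<open>\<Phi>\<^sub>\<theta>(x, 0)\<close> and \<open>\<Phi>\<^sub>\<theta>(x, \<plusminus>1)\<close>, and the claim reduces to a ring identity in
  \<open>x, \<theta>, A, \<dots>, E\<close>.\<close>

lemma quadratic_discriminant_from_values:
  fixes f :: "'a::field_char_0 \<Rightarrow> 'a"
  assumes "\<And>y. f y = a * y^2 + 2 * b * y + c"
  shows "b^2 - a * c = ((f 1 - f (-1)) / 4)^2 - ((f 1 + f (-1)) / 2 - f 0) * f 0"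
proof -
  have "f 0 = c" "f 1 = a + 2 * b + c" "f (-1) = a - 2 * b + c"
    using assms[of 0] assms[of 1] assms[of "-1"] by simp_all
  then have "b = (f 1 - f (-1)) / 4" and "a = (f 1 + f (-1)) / 2 - f 0" and "c = f 0"
    by (simp_all add: field_simps)
  then show ?thesis by (simp only:)
qed

lemma Phi_discriminant_from_values:
  "((Phi A B C D E t x 1 - Phi A B C D E t x (-1)) / 4)^2
     - ((Phi A B C D E t x 1 + Phi A B C D E t x (-1)) / 2 - Phi A B C D E t x 0) * Phi A B C D E t x 0
   = pth A B C D E t * quartP A B C D E x"
  unfolding Phi_def RR_def RRhat_def pth_def quartP_def
  by (simp add: field_simps power2_eq_square power3_eq_cube power4_eq_xxxx)

lemma poly_quartP: "poly [:A, 4*B, 6*C, 4*D, E:] x = quartP A B C D E x"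
  unfolding quartP_def by (simp add: algebra_simps power2_eq_square power3_eq_cube power4_eq_xxxx)

theorem theorem5:
  fixes A B C D E t :: complex and a b c :: "complex poly"
  assumes "\<forall>x y. Phi A B C D E t x y = poly a x * y^2 + 2 * poly b x * y + poly c x"
  shows "b^2 - a*c = smult (pth A B C D E t) [:A, 4*B, 6*C, 4*D, E:] \<and>
    (\<forall>x. (poly b x)^2 - poly a x * poly c x = pth A B C D E t * quartP A B C D E x)"
proof -
  have pointwise: "(poly b x)^2 - poly a x * poly c x = pth A B C D E t * quartP A B C D E x" for x
    unfolding Phi_discriminant_from_values[symmetric]
    by (rule quadratic_discriminant_from_values) (use assms in blast)
  then have "poly (b^2 - a*c) = poly (smult (pth A B C D E t) [:A, 4*B, 6*C, 4*D, E:])"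
    by (simp only: fun_eq_iff poly_diff poly_mult poly_smult poly_power poly_quartP simp_thms)
  then show ?thesis
    using pointwise poly_eq_poly_eq_iff by blast
qed

end
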